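(* Let $n\ge2$ be an integer and $\tau=\inf\{t\ge0: p_t\ge n\}$ for the Markov chain $(p_t)$ with $p_0=1$ defined in the context. Then $\mathbb{P}\big(\tau\ge (n^2-n+3)/2\big)\le 1/2$.
   Context: $(p_t)_{t\ge0}$ is a time-homogeneous Markov chain on the positive integers with $p_0=1$ and transitions: if $p_t=p\ge2$, then $\mathbb{P}(p_{t+1}=p+j)=(1/2)^{j+2}$ for $j\in\{-1,0,1,2,\dots\}$; if $p_t=1$, then $\mathbb{P}(p_{t+1}=1+j)=(1/2)^{j+1}$ for $j\in\{0,1,2,\dots\}$. *)

theory Defs
  imports "HOL-Probability.Probability"
begin

text \<open>One-step transition law of the chain.  For p \<ge> 2: P(p+j) = (1/2)^(j+2), j \<ge> -1;
  for p = 1: P(1+j) = (1/2)^(j+1), j \<ge> 0.  (geometric_pmf (1/2) gives i with prob. (1/2)^(i+1).)\<close>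
definition trans_pmf :: "nat \<Rightarrow> nat pmf" where
  "trans_pmf p = (if p \<le> 1 then map_pmf (\<lambda>i. 1 + i) (geometric_pmf (1/2))
                  else map_pmf (\<lambda>i. p - 1 + i) (geometric_pmf (1/2)))"

fun path_pmf :: "nat \<Rightarrow> nat list pmf" where
  "path_pmf 0 = return_pmf [1]"
| "path_pmf (Suc k) = bind_pmf (path_pmf k) (\<lambda>xs. map_pmf (\<lambda>y. xs @ [y]) (trans_pmf (last xs)))"

text \<open>P(tau \<ge> x) where tau = inf{t \<ge> 0 : p_t \<ge> n} (inf of the empty set = \<infinity>):
  the event tau \<ge> x is the event that p_t < n for every integer time t \<ge> 0 with t < x.
  These times all lie in {0..ceil x}, so the path up to time nat ceil x suffices.\<close>
definition prob_tau_ge :: "nat \<Rightarrow> real \<Rightarrow> real" where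
  "prob_tau_ge n x = measure_pmf.prob (path_pmf (nat \<lceil>x\<rceil>))
      {xs. \<forall>t < length xs. real t < x \<longrightarrow> xs ! t < n}"

end

theory Submission
  imports Defs
begin

text \<open>Shifted down by one, the chain is a simple random walk on the integers observed just
  after each of its down-steps: from position x = p - 1 the walk makes i up-steps and then a
  down-step with probability 2^-(i+1), landing at x - 1 + i; from 0 it first steps to 1, which
  is harmless for functions that are even in x.  So a function Phi(x, M) that is harmonic for
  the walk in space-time, Phi(x, M + 1) = (Phi(x - 1, M) + Phi(x + 1, M)) / 2, even in x and
  nonnegative at x = n, is a supermartingale of the chain killed at n once M is the number of
  walk steps still available.  We take for Phi a combination of the modes cos(ka)^M cos(kax),
  a = pi/(2n), k = 1, 3, 4, 5, whose coefficients give Phi(x, 0) =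
  1 + 2 sqrt2 y (1 - y^2)(sqrt2 y - 1)^2 \<ge> 1 for y = cos(ax) and Phi(n, M) = cos(4a)^M.
  Started at state 1 with (n^2 - n)/2 + 1 chain steps to go, the walk has n^2 steps, and
  Phi(0, n^2) \<le> 1/2 because cos(a)^(n^2) is about exp(-pi^2/8).  For n \<le> 3 a geometric
  bound on the probability of staying below n for one step suffices.\<close>

definition trans_base :: "nat \<Rightarrow> nat" where
  "trans_base p = (if p \<le> 1 then 1 else p - 1)"

lemma trans_pmf_eq_map_geometric:
  "trans_pmf p = map_pmf (\<lambda>i. trans_base p + i) (geometric_pmf (1/2))"
  by (simp add: trans_pmf_def trans_base_def)

lemma pmf_trans_pmf:
  "pmf (trans_pmf p) q = (if trans_base p \<le> q then (1/2) ^ (q - trans_base p + 1) else 0)"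
proof (cases "trans_base p \<le> q")
  case True
  then have "pmf (trans_pmf p) q
      = pmf (map_pmf (\<lambda>i. trans_base p + i) (geometric_pmf (1/2))) (trans_base p + (q - trans_base p))"
    by (simp add: trans_pmf_eq_map_geometric)
  also have "\<dots> = pmf (geometric_pmf (1/2)) (q - trans_base p)"
    by (rule pmf_map_inj') (auto simp: inj_def)
  finally show ?thesis using True by simp
next
  case False
  then have "q \<notin> set_pmf (trans_pmf p)" by (auto simp: trans_pmf_eq_map_geometric)
  then show ?thesis using False by (simp add: set_pmf_iff)
qed

lemma sum_lessThan_trans_pmf:
  assumes "trans_base p \<le> n"
  shows "(\<Sum>q<n. pmf (trans_pmf p) q * g q)
    = (\<Sum>i<n - trans_base p. (1/2) ^ (i + 1) * g (trans_base p + i))"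
proof -
  have "(\<Sum>q<n. pmf (trans_pmf p) q * g q)
      = (\<Sum>q\<in>{trans_base p..<n}. (1/2) ^ (q - trans_base p + 1) * g q)"
    using assms by (intro sum.mono_neutral_cong_right) (auto simp: pmf_trans_pmf)
  also have "\<dots> = (\<Sum>i<n - trans_base p. (1/2) ^ (i + 1) * g (trans_base p + i))"
    by (simp add: sum.atLeastLessThan_shift_0 atLeast0LessThan)
  finally show ?thesis .
qed

lemma sum_lessThan_trans_pmf_from_base_1:
  assumes "trans_base p = 1" "1 \<le> n"
  shows "(\<Sum>q<n. pmf (trans_pmf p) q) = 1 - (1/2) ^ (n - 1)"
proof -
  have "(\<Sum>q<n. pmf (trans_pmf p) q) = (\<Sum>i<n - 1. (1/2) * (1/2 :: real) ^ i)"
    using sum_lessThan_trans_pmf[of p n "\<lambda>_. 1"] assms by simp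
  also have "\<dots> = 1/2 * (\<Sum>i<n - 1. (1/2 :: real) ^ i)"
    by (simp add: sum_distrib_left)
  also have "\<dots> = 1 - (1/2) ^ (n - 1)"
    by (simp add: sum_gp_strict)
  finally show ?thesis .
qed

lemma length_path_pmf: "xs \<in> set_pmf (path_pmf k) \<Longrightarrow> length xs = Suc k"
  by (induction k arbitrary: xs) auto

lemma map_pmf_butlast_path_pmf: "map_pmf butlast (path_pmf (Suc k)) = path_pmf k"
  by (simp add: map_bind_pmf pmf.map_comp o_def bind_return_pmf')

lemma prob_tau_ge_eq_prob_below:
  assumes "real k < x" "x \<le> real k + 1"
  shows "prob_tau_ge n x = measure_pmf.prob (path_pmf k) {xs. set xs \<subseteq> {..<n}}"
proof -
  have below_iff: "(\<forall>t<length ys. real t < x \<longrightarrow> ys ! t < n) \<longleftrightarrow> set (butlast ys) \<subseteq> {..<n}"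
    if "ys \<in> set_pmf (path_pmf (Suc k))" for ys
  proof -
    have "real t < x \<longleftrightarrow> t < length (butlast ys)" for t
      using assms length_path_pmf[OF that] by auto
    then show ?thesis
      unfolding subset_iff in_set_conv_nth lessThan_iff by (force simp: nth_butlast)
  qed
  have "nat \<lceil>x\<rceil> = Suc k"
    using assms by (simp add: ceiling_unique nat_eq_iff)
  then have "prob_tau_ge n x
      = measure_pmf.prob (path_pmf (Suc k)) {ys. \<forall>t<length ys. real t < x \<longrightarrow> ys ! t < n}"
    unfolding prob_tau_ge_def by (simp only:)
  also have "\<dots> = measure_pmf.prob (path_pmf (Suc k)) (butlast -` {xs. set xs \<subseteq> {..<n}})"
    using below_iff
    by (intro measure_prob_cong_0) (auto simp: pmf_eq_0_set_pmf simp del: path_pmf.simps)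
  also have "\<dots> = measure_pmf.prob (path_pmf k) {xs. set xs \<subseteq> {..<n}}"
    by (simp only: measure_map_pmf[symmetric] map_pmf_butlast_path_pmf)
  finally show ?thesis .
qed

definition killed_spmf :: "nat \<Rightarrow> nat \<Rightarrow> nat spmf" where
  "killed_spmf n k = map_pmf (\<lambda>xs. if set xs \<subseteq> {..<n} then Some (last xs) else None) (path_pmf k)"

lemma killed_spmf_0: "1 < n \<Longrightarrow> killed_spmf n 0 = return_spmf 1"
  by (simp add: killed_spmf_def)

lemma killed_spmf_Suc:
  "killed_spmf n (Suc k) = bind_spmf (killed_spmf n k) (\<lambda>p. restrict_spmf (spmf_of_pmf (trans_pmf p)) {..<n})"
  unfolding killed_spmf_def bind_spmf_def restrict_spmf_def spmf_of_pmf_def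
  by (auto simp: map_bind_pmf bind_map_pmf pmf.map_comp o_def map_pmf_const
           intro!: bind_pmf_cong map_pmf_cong)

lemma in_set_killed_spmf: "Some q \<in> set_pmf (killed_spmf n k) \<Longrightarrow> q < n"
proof -
  assume "Some q \<in> set_pmf (killed_spmf n k)"
  then obtain xs where xs: "xs \<in> set_pmf (path_pmf k)" "set xs \<subseteq> {..<n}" "q = last xs"
    by (auto simp: killed_spmf_def split: if_splits)
  then have "xs \<noteq> []" using length_path_pmf by fastforce
  then show "q < n" using xs last_in_set by blast
qed

lemma spmf_killed_spmf_Suc:
  assumes "q < n"
  shows "spmf (killed_spmf n (Suc k)) q = (\<Sum>p<n. spmf (killed_spmf n k) p * pmf (trans_pmf p) q)"
proof -
  define step where "step s = (case s of
      None \<Rightarrow> return_pmf None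
    | Some p \<Rightarrow> restrict_spmf (spmf_of_pmf (trans_pmf p)) {..<n})" for s
  have "spmf (killed_spmf n (Suc k)) q = measure_pmf.expectation (killed_spmf n k) (\<lambda>s. spmf (step s) q)"
    unfolding killed_spmf_Suc bind_spmf_def pmf_bind step_def ..
  also have "\<dots> = (\<Sum>s\<in>Some ` {..<n}. spmf (step s) q * pmf (killed_spmf n k) s)"
    by (intro integral_measure_pmf_real) (auto simp: step_def split: option.splits dest: in_set_killed_spmf)
  also have "\<dots> = (\<Sum>p<n. spmf (killed_spmf n k) p * pmf (trans_pmf p) q)"
    using assms by (simp add: sum.reindex step_def mult.commute)
  finally show ?thesis .
qed

lemma prob_below_eq_sum_killed_spmf:
  "measure_pmf.prob (path_pmf k) {xs. set xs \<subseteq> {..<n}} = (\<Sum>q<n. spmf (killed_spmf n k) q)"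
proof -
  have "measure_pmf.prob (path_pmf k) {xs. set xs \<subseteq> {..<n}}
      = measure_pmf.prob (killed_spmf n k) (range Some)"
    by (simp add: killed_spmf_def measure_map_pmf vimage_def)
  also have "\<dots> = measure_pmf.prob (killed_spmf n k) (Some ` {..<n})"
    by (intro measure_prob_cong_0) (auto simp: pmf_eq_0_set_pmf dest: in_set_killed_spmf)
  also have "\<dots> = (\<Sum>q<n. spmf (killed_spmf n k) q)"
    by (simp add: measure_measure_pmf_finite sum.reindex)
  finally show ?thesis .
qed

lemma sum_killed_spmf_le:
  assumes "1 < n"
    and superharmonic: "\<And>j p. p < n \<Longrightarrow> (\<Sum>q<n. pmf (trans_pmf p) q * U j q) \<le> U (Suc j) p"
  shows "(\<Sum>q<n. spmf (killed_spmf n k) q * U j q) \<le> U (j + k) 1"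
proof (induction k arbitrary: j)
  case 0
  then show ?case using assms(1) by (simp add: killed_spmf_0 indicator_def)
next
  case (Suc k)
  have "(\<Sum>q<n. spmf (killed_spmf n (Suc k)) q * U j q)
      = (\<Sum>q<n. \<Sum>p<n. spmf (killed_spmf n k) p * pmf (trans_pmf p) q * U j q)"
    by (simp add: spmf_killed_spmf_Suc sum_distrib_right)
  also have "\<dots> = (\<Sum>p<n. spmf (killed_spmf n k) p * (\<Sum>q<n. pmf (trans_pmf p) q * U j q))"
    by (subst sum.swap) (simp add: sum_distrib_left mult.assoc)
  also have "\<dots> \<le> (\<Sum>p<n. spmf (killed_spmf n k) p * U (Suc j) p)"
    by (intro sum_mono mult_left_mono superharmonic) auto
  also have "\<dots> \<le> U (j + Suc k) 1"
    using Suc.IH[of "Suc j"] by simp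
  finally show ?case .
qed

lemma prob_tau_ge_le_superharmonic:
  assumes "1 < n" "real k < x" "x \<le> real k + 1"
    and "\<And>p. p < n \<Longrightarrow> 1 \<le> U 0 p"
    and "\<And>j p. p < n \<Longrightarrow> (\<Sum>q<n. pmf (trans_pmf p) q * U j q) \<le> U (Suc j) p"
  shows "prob_tau_ge n x \<le> U k 1"
proof -
  have "prob_tau_ge n x = (\<Sum>q<n. spmf (killed_spmf n k) q)"
    using assms(2,3) by (simp add: prob_tau_ge_eq_prob_below prob_below_eq_sum_killed_spmf)
  also have "\<dots> \<le> (\<Sum>q<n. spmf (killed_spmf n k) q * U 0 q)"
    using assms(4) by (intro sum_mono) (simp add: mult_le_cancel_left1)
  also have "\<dots> \<le> U k 1"
    using sum_killed_spmf_le[of n U k 0] assms(1,5) by simp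
  finally show ?thesis .
qed

lemma prob_tau_ge_le_power:
  assumes "1 < n" "real k < x" "x \<le> real k + 1" "0 \<le> c"
    and "\<And>p. p < n \<Longrightarrow> (\<Sum>q<n. pmf (trans_pmf p) q) \<le> c"
  shows "prob_tau_ge n x \<le> c ^ k"
  using assms(1-3)
proof (rule prob_tau_ge_le_superharmonic)
  show "(\<Sum>q<n. pmf (trans_pmf p) q * c ^ j) \<le> c ^ Suc j" if "p < n" for j p
    using mult_right_mono[OF assms(5)[OF that], of "c ^ j"] assms(4)
    by (simp add: sum_distrib_right[symmetric])
qed simp

text \<open>The walk started at z either climbs i \<le> r steps and then steps down, or climbs r + 1
  steps.\<close>

lemma avg_recursion_unfold:
  fixes f :: "real \<Rightarrow> nat \<Rightarrow> real"
  assumes avg: "\<And>x M. f x (Suc M) = (f (x - 1) M + f (x + 1) M) / 2"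
    and "r < M"
  shows "f z M = (\<Sum>i\<le>r. (1/2) ^ (i + 1) * f (z - 1 + real i) (M - 1 - i))
                 + (1/2) ^ (r + 1) * f (z + real r + 1) (M - 1 - r)"
  using assms(2)
proof (induction r)
  case 0
  then obtain M' where "M = Suc M'" by (cases M) auto
  then show ?case using avg[of z M'] by simp
next
  case (Suc r)
  define M' where "M' = M - 1 - Suc r"
  have M': "M - 1 - r = Suc M'" "M - 1 - Suc r = M'"
    using Suc.prems by (simp_all add: M'_def)
  have step: "f (z + real r + 1) (M - 1 - r)
      = (f (z - 1 + real (Suc r)) M' + f (z + real (Suc r) + 1) M') / 2"
    unfolding M'(1) avg by (simp add: add.assoc add.commute)
  have "(1/2) ^ (r + 1) * f (z + real r + 1) (M - 1 - r)
      = (1/2) ^ (Suc r + 1) * f (z - 1 + real (Suc r)) (M - 1 - Suc r)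
        + (1/2) ^ (Suc r + 1) * f (z + real (Suc r) + 1) (M - 1 - Suc r)"
    unfolding M'(2) step by (simp add: field_simps)
  then show ?case
    using Suc.IH Suc.prems by simp
qed

definition cos_mode :: "real \<Rightarrow> nat \<Rightarrow> real \<Rightarrow> real" where
  "cos_mode a M x = cos a ^ M * cos (a * x)"

lemma cos_mode_Suc: "cos_mode a (Suc M) x = (cos_mode a M (x - 1) + cos_mode a M (x + 1)) / 2"
proof -
  have "cos a * cos (a * x) = (cos (a * (x - 1)) + cos (a * (x + 1))) / 2"
    by (simp add: right_diff_distrib distrib_left cos_add cos_diff)
  then have "cos a ^ M * (cos a * cos (a * x))
      = (cos a ^ M * cos (a * (x - 1)) + cos a ^ M * cos (a * (x + 1))) / 2"
    by (simp add: distrib_left add_divide_distrib)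
  then show ?thesis
    by (simp add: cos_mode_def mult.left_commute)
qed

lemma cos_mode_minus: "cos_mode a M (- x) = cos_mode a M x"
  by (simp add: cos_mode_def)

definition barrier :: "real \<Rightarrow> real \<Rightarrow> nat \<Rightarrow> real" where
  "barrier a x M = sqrt 2 * cos_mode a M x - 3 * sqrt 2 / 4 * cos_mode (3 * a) M x
     + cos_mode (4 * a) M x - sqrt 2 / 4 * cos_mode (5 * a) M x"

lemma barrier_Suc: "barrier a x (Suc M) = (barrier a (x - 1) M + barrier a (x + 1) M) / 2"
  unfolding barrier_def cos_mode_Suc by (simp add: algebra_simps add_divide_distrib diff_divide_distrib)

lemma barrier_minus: "barrier a (- x) M = barrier a x M"
  by (simp add: barrier_def cos_mode_minus)

lemma barrier_0_ge_one:
  assumes "\<bar>a * x\<bar> \<le> pi / 2"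
  shows "1 \<le> barrier a x 0"
proof -
  define y where "y = cos (a * x)"
  define s where "s = sqrt (2::real)"
  have s2: "s * s = 2"
    by (simp add: s_def)
  have y: "0 \<le> y" "y \<le> 1"
    using assms by (auto simp: y_def intro: cos_ge_zero)
  have c3: "cos (3 * (a * x)) = 4 * y ^ 3 - 3 * y"
    unfolding y_def by (rule cos_treble_cos)
  have c4: "cos (4 * (a * x)) = 2 * (2 * y\<^sup>2 - 1)\<^sup>2 - 1"
    using cos_double_cos[of "2 * (a * x)"] cos_double_cos[of "a * x"] by (simp add: y_def)
  have c5: "cos (5 * (a * x)) = 2 * y * cos (4 * (a * x)) - cos (3 * (a * x))"
    using cos_add[of "4 * (a * x)" "a * x"] cos_diff[of "4 * (a * x)" "a * x"]
    by (simp add: y_def algebra_simps)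
  have "barrier a x 0 = s * y - 3 * s / 4 * cos (3 * (a * x)) + cos (4 * (a * x))
      - s / 4 * cos (5 * (a * x))"
    by (simp add: barrier_def cos_mode_def y_def s_def mult.assoc)
  also have "\<dots> = 1 + 2 * s * y * (1 - y\<^sup>2) * (s * y - 1)\<^sup>2"
    using c3 c4 c5 s2 by algebra
  finally show ?thesis
    using y by (simp add: s_def power_le_one)
qed

lemma barrier_ge_one:
  assumes "0 \<le> a" "a * (\<bar>x\<bar> + real M) \<le> pi / 2"
  shows "1 \<le> barrier a x M"
  using assms(2)
proof (induction M arbitrary: x)
  case 0
  then show ?case using assms(1) by (intro barrier_0_ge_one) (simp add: abs_mult)
next
  case (Suc M)
  have "a * (\<bar>x + d\<bar> + real M) \<le> pi / 2" if "\<bar>d\<bar> = 1" for d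
  proof -
    have "a * (\<bar>x + d\<bar> + real M) \<le> a * (\<bar>x\<bar> + real (Suc M))"
      using assms(1) that by (intro mult_left_mono) auto
    then show ?thesis using Suc.prems by linarith
  qed
  then have "1 \<le> barrier a (x + d) M" if "\<bar>d\<bar> = 1" for d
    using Suc.IH that by blast
  from this[of "- 1"] this[of 1] have "1 \<le> barrier a (x - 1) M" "1 \<le> barrier a (x + 1) M"
    by simp_all
  then show ?case by (simp add: barrier_Suc)
qed

lemma barrier_at_quarter_period:
  assumes "a * x = pi / 2"
  shows "barrier a x M = cos (4 * a) ^ M"
proof -
  have "cos (k * a * x) = cos (k * (pi / 2))" for k :: real
    by (simp add: assms mult.assoc)
  moreover have "cos (3 * (pi / 2)) = 0" "cos (4 * (pi / 2)) = 1" "cos (5 * (pi / 2)) = 0"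
    using cos_3over2_pi cos_periodic[of "pi / 2"] by (simp_all add: algebra_simps)
  ultimately show ?thesis
    by (simp add: barrier_def cos_mode_def assms)
qed

lemma cos_le_quartic: "cos (x::real) \<le> 1 - x\<^sup>2 / 2 + x ^ 4 / 24"
proof -
  obtain t where t: "cos x = (\<Sum>m<4. cos_coeff m * x ^ m) + cos (t + 1/2 * real 4 * pi) / fact 4 * x ^ 4"
    using Maclaurin_cos_expansion[of x 4] by blast
  have "{..<4::nat} = {0, 1, 2, 3}"
    by auto
  then have taylor: "(\<Sum>m<4. cos_coeff m * x ^ m) = 1 - x\<^sup>2 / 2"
    by (simp add: cos_coeff_def)
  have "cos (t + 1/2 * real 4 * pi) * x ^ 4 \<le> x ^ 4"
    using mult_right_mono[OF cos_le_one, of "x ^ 4"] by simp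
  then have remainder: "cos (t + 1/2 * real 4 * pi) / fact 4 * x ^ 4 \<le> x ^ 4 / 24"
    by (simp add: fact_numeral)
  show ?thesis
    using t taylor remainder by linarith
qed

lemma cos_power_le_exp:
  assumes "0 \<le> b" "b \<le> pi / 2"
  shows "cos b ^ M \<le> exp (- (real M * (b\<^sup>2 * (1/2 - b\<^sup>2 / 24))))"
proof -
  define c where "c = b\<^sup>2 * (1/2 - b\<^sup>2 / 24)"
  have "cos b \<le> 1 - c"
    using cos_le_quartic[of b] by (simp add: c_def algebra_simps power4_eq_xxxx power2_eq_square)
  also have "\<dots> \<le> exp (- c)"
    using exp_ge_add_one_self[of "- c"] by simp
  finally have "cos b ^ M \<le> exp (- c) ^ M"
    using assms by (intro power_mono cos_ge_zero) auto
  then show ?thesis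
    by (simp add: c_def exp_of_nat_mult[symmetric])
qed

lemma sqrt2_exp_bound: "sqrt 2 * exp (- (6/5)) + exp (- 12) \<le> (1/2 :: real)"
proof -
  have "sqrt 2 \<le> sqrt ((71/50)\<^sup>2 :: real)"
    by (intro real_sqrt_le_mono) (simp add: power2_eq_square)
  then have s: "sqrt 2 \<le> (71/50 :: real)"
    by simp
  have "73/25 \<le> exp (6/5 :: real)" "85 \<le> exp (12 :: real)"
    using exp_lower_Taylor_quadratic[of "6/5"] exp_lower_Taylor_quadratic[of 12]
    by (simp_all add: power2_eq_square)
  then have e: "exp (- (6/5)) \<le> (25/73 :: real)" "exp (- 12) \<le> (1/85 :: real)"
    using le_imp_inverse_le[of "73/25 :: real" "exp (6/5)"] le_imp_inverse_le[of "85 :: real" "exp 12"]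
    by (simp_all add: exp_minus)
  have "sqrt 2 * exp (- (6/5)) \<le> 71/50 * (25/73 :: real)"
    using s e by (intro mult_mono) auto
  then show ?thesis
    using e by simp
qed

lemma cos_power_le_exp_neg_six_fifths:
  assumes "0 < a" "a \<le> pi / 8" "real M * a\<^sup>2 = pi\<^sup>2 / 4"
  shows "cos a ^ M \<le> exp (- (6/5))"
proof -
  have "157/50 \<le> pi"
    using pi_approx by simp
  then have "157/50 * (157/50) \<le> pi * pi"
    by (intro mult_mono) auto
  then have pi2: "24649/2500 \<le> pi\<^sup>2"
    by (simp add: power2_eq_square)
  have "a * a \<le> 1/2 * (1/2)"
    using assms pi_less_4 by (intro mult_mono) auto
  then have "a\<^sup>2 \<le> 1/4"
    by (simp add: power2_eq_square)
  then have "pi\<^sup>2 / 4 * (47/96) \<le> pi\<^sup>2 / 4 * (1/2 - a\<^sup>2 / 24)"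
    by (intro mult_left_mono) auto
  then have "6/5 \<le> pi\<^sup>2 / 4 * (1/2 - a\<^sup>2 / 24)"
    using pi2 by linarith
  then have "6/5 \<le> real M * (a\<^sup>2 * (1/2 - a\<^sup>2 / 24))"
    by (simp only: mult.assoc[symmetric] assms(3))
  then have "exp (- (real M * (a\<^sup>2 * (1/2 - a\<^sup>2 / 24)))) \<le> exp (- (6/5))"
    by simp
  moreover have "cos a ^ M \<le> exp (- (real M * (a\<^sup>2 * (1/2 - a\<^sup>2 / 24))))"
    using assms pi_less_4 by (intro cos_power_le_exp) auto
  ultimately show ?thesis
    by linarith
qed

lemma cos_4_power_le_exp_neg_12:
  assumes "0 < a" "a \<le> pi / 8" "real M * a\<^sup>2 = pi\<^sup>2 / 4"
  shows "cos (4 * a) ^ M \<le> exp (- 12)"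
proof -
  have "(4 * a) * (4 * a) \<le> 2 * 2"
    using assms pi_less_4 by (intro mult_mono) auto
  then have "(4 * a)\<^sup>2 \<le> 4"
    by (simp add: power2_eq_square)
  then have "4 * pi\<^sup>2 * (1/3) \<le> 4 * pi\<^sup>2 * (1/2 - (4 * a)\<^sup>2 / 24)"
    by (intro mult_left_mono) auto
  moreover have "real M * (4 * a)\<^sup>2 = 4 * pi\<^sup>2"
    using assms(3) by (simp add: power_mult_distrib)
  moreover have "12 \<le> 4 * pi\<^sup>2 * (1/3)"
    using pi_gt3 power_mono[of 3 pi 2] by simp
  ultimately have "12 \<le> real M * ((4 * a)\<^sup>2 * (1/2 - (4 * a)\<^sup>2 / 24))"
    by (simp only: mult.assoc[symmetric])
  then have "exp (- (real M * ((4 * a)\<^sup>2 * (1/2 - (4 * a)\<^sup>2 / 24)))) \<le> exp (- 12)"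
    by simp
  moreover have "cos (4 * a) ^ M \<le> exp (- (real M * ((4 * a)\<^sup>2 * (1/2 - (4 * a)\<^sup>2 / 24))))"
    using assms by (intro cos_power_le_exp) auto
  ultimately show ?thesis
    by linarith
qed

lemma barrier_0_le_half:
  assumes "4 \<le> n"
  shows "barrier (pi / (2 * real n)) 0 (n * n) \<le> 1 / 2"
proof -
  define a where "a = pi / (2 * real n)"
  define M where "M = n * n"
  have "pi / (2 * real n) \<le> pi / (2 * 4)"
    using assms by (intro divide_left_mono) auto
  then have a: "0 < a" "a \<le> pi / 8"
    using assms by (simp_all add: a_def)
  have Ma: "real M * a\<^sup>2 = pi\<^sup>2 / 4"
    using assms by (simp add: a_def M_def power2_eq_square)
  have "0 \<le> cos (3 * a) ^ M"
    using a by (intro zero_le_power cos_ge_zero) auto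
  then have "0 \<le> sqrt 2 * cos (3 * a) ^ M"
    by simp
  moreover have "0 \<le> cos (5 * a) ^ M"
  proof (cases "n = 4")
    case True
    then show ?thesis by (simp add: M_def zero_le_even_power)
  next
    case False
    then have "pi / (2 * real n) \<le> pi / (2 * 5)"
      using assms by (intro divide_left_mono) auto
    then show ?thesis
      using a by (intro zero_le_power cos_ge_zero) (auto simp: a_def)
  qed
  then have "0 \<le> sqrt 2 * cos (5 * a) ^ M"
    by simp
  moreover have "sqrt 2 * cos a ^ M \<le> sqrt 2 * exp (- (6/5))"
    using cos_power_le_exp_neg_six_fifths[OF a Ma] by (intro mult_left_mono) auto
  moreover have "barrier a 0 M = sqrt 2 * cos a ^ M - 3/4 * (sqrt 2 * cos (3 * a) ^ M)
      + cos (4 * a) ^ M - 1/4 * (sqrt 2 * cos (5 * a) ^ M)"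
    by (simp add: barrier_def cos_mode_def)
  ultimately have "barrier a 0 M \<le> sqrt 2 * exp (- (6/5)) + exp (- 12)"
    using cos_4_power_le_exp_neg_12[OF a Ma] by linarith
  then show ?thesis
    using sqrt2_exp_bound by (simp add: a_def M_def)
qed

text \<open>State p of the chain is position p - 1 of the walk, and with j chain steps to go the walk
  has 2 j + n - 1 - p steps left; the unreachable state 0 is given the value of state 1.\<close>

definition chain_barrier :: "nat \<Rightarrow> nat \<Rightarrow> nat \<Rightarrow> real" where
  "chain_barrier n j p = barrier (pi / (2 * real n)) (real (max p 1) - 1) (2 * j + n - 1 - max p 1)"

lemma chain_barrier_0_ge_one:
  assumes "p < n"
  shows "1 \<le> chain_barrier n 0 p"
  unfolding chain_barrier_def
proof (rule barrier_ge_one)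
  have "real (max p 1) - 1 + real (n - 1 - max p 1) \<le> real n"
    using assms by (simp add: max_def of_nat_diff)
  then have "pi / (2 * real n) * (\<bar>real (max p 1) - 1\<bar> + real (n - 1 - max p 1)) \<le> pi / (2 * real n) * real n"
    by (intro mult_left_mono) auto
  also have "\<dots> = pi / 2"
    using assms by simp
  finally show "pi / (2 * real n) * (\<bar>real (max p 1) - 1\<bar> + real (2 * 0 + n - 1 - max p 1)) \<le> pi / 2"
    by simp
qed simp

lemma barrier_ge_sum_before_exit:
  assumes "a * real n = pi / 2" "b < n"
  shows "(\<Sum>i\<le>n - 1 - b. (1/2) ^ (i + 1) * barrier a (real b - 1 + real i) (2 * j + n - b - 1 - i))
    \<le> barrier a (real b) (2 * j + n - b)"
proof -
  have "barrier a (real b) (2 * j + n - b)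
      = (\<Sum>i\<le>n - 1 - b. (1/2) ^ (i + 1) * barrier a (real b - 1 + real i) (2 * j + n - b - 1 - i))
        + (1/2) ^ (n - b) * barrier a (real n) (2 * j)"
    using avg_recursion_unfold[of "barrier a" "n - 1 - b" "2 * j + n - b" "real b", OF barrier_Suc] assms(2)
    by (simp add: of_nat_diff Suc_diff_Suc)
  moreover have "barrier a (real n) (2 * j) = cos (4 * a) ^ (2 * j)"
    using assms(1) by (rule barrier_at_quarter_period)
  ultimately show ?thesis
    by (simp add: zero_le_even_power)
qed

lemma sum_trans_pmf_chain_barrier:
  assumes "2 \<le> n" "p < n"
  shows "(\<Sum>q<n. pmf (trans_pmf p) q * chain_barrier n j q)
    = (\<Sum>i\<le>n - 1 - trans_base p. (1/2) ^ (i + 1)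
        * barrier (pi / (2 * real n)) (real (trans_base p) - 1 + real i) (2 * j + n - trans_base p - 1 - i))"
proof -
  have b: "1 \<le> trans_base p" "trans_base p \<le> n - 1"
    using assms by (auto simp: trans_base_def)
  then have "{..<n - trans_base p} = {..n - 1 - trans_base p}"
    by auto
  moreover have "max (trans_base p + i) 1 = trans_base p + i" for i
    using b by simp
  ultimately show ?thesis
    using b by (simp add: sum_lessThan_trans_pmf chain_barrier_def algebra_simps)
qed

lemma chain_barrier_Suc:
  assumes "p < n"
  shows "chain_barrier n (Suc j) p
    = barrier (pi / (2 * real n)) (real (trans_base p)) (2 * j + n - trans_base p)"
proof (cases "p \<le> 1")
  case True
  then show ?thesis
    using assms barrier_Suc[of "pi / (2 * real n)" 0 "2 * j + n - 1"]
    by (simp add: chain_barrier_def trans_base_def max_def barrier_minus)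
next
  case False
  then show ?thesis
    using assms by (simp add: trans_base_def chain_barrier_def max_def of_nat_diff)
qed

lemma chain_barrier_superharmonic:
  assumes "2 \<le> n" "p < n"
  shows "(\<Sum>q<n. pmf (trans_pmf p) q * chain_barrier n j q) \<le> chain_barrier n (Suc j) p"
proof -
  have "trans_base p < n"
    using assms by (auto simp: trans_base_def)
  then show ?thesis
    unfolding sum_trans_pmf_chain_barrier[OF assms] chain_barrier_Suc[OF assms(2)]
    by (intro barrier_ge_sum_before_exit) auto
qed

lemma tau_threshold:
  assumes "1 \<le> n"
  shows "real (n * (n - 1) div 2 + 1) < (real n ^ 2 - real n + 3) / 2"
    and "(real n ^ 2 - real n + 3) / 2 \<le> real (n * (n - 1) div 2 + 1) + 1"
proof -
  have "even (n * (n - 1))"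
    by auto
  then have "2 * (n * (n - 1) div 2 + 1) = n * (n - 1) + 2"
    by simp
  then have "2 * real (n * (n - 1) div 2 + 1) = real n * real (n - 1) + 2"
    by (metis of_nat_add of_nat_mult of_nat_numeral)
  then have "(real n ^ 2 - real n + 3) / 2 = real (n * (n - 1) div 2 + 1) + 1/2"
    using assms by (simp add: power2_eq_square of_nat_diff algebra_simps)
  then show "real (n * (n - 1) div 2 + 1) < (real n ^ 2 - real n + 3) / 2"
    and "(real n ^ 2 - real n + 3) / 2 \<le> real (n * (n - 1) div 2 + 1) + 1"
    by simp_all
qed

lemma chain_barrier_start:
  assumes "1 \<le> n"
  shows "chain_barrier n (n * (n - 1) div 2 + 1) 1 = barrier (pi / (2 * real n)) 0 (n * n)"
proof -
  have "even (n * (n - 1))"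
    by auto
  then have "2 * (n * (n - 1) div 2 + 1) + n - 1 - 1 = n * n"
    using assms by (cases n) simp_all
  then show ?thesis
    by (simp add: chain_barrier_def)
qed

lemma small_chain_power_le_half:
  assumes "2 \<le> n" "n \<le> 3"
  shows "(1 - (1/2) ^ (n - 1)) ^ (n * (n - 1) div 2 + 1) \<le> (1/2 :: real)"
proof -
  have "n = 2 \<or> n = 3"
    using assms by linarith
  then show ?thesis
    by (elim disjE) (simp_all add: power_divide)
qed

lemma prob_tau_ge_le_half_small:
  assumes "2 \<le> n" "n \<le> 3"
  shows "prob_tau_ge n ((real n ^ 2 - real n + 3) / 2) \<le> 1 / 2"
proof -
  have "trans_base p = 1" if "p < n" for p
    using that assms by (auto simp: trans_base_def)
  then have "prob_tau_ge n ((real n ^ 2 - real n + 3) / 2)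
      \<le> (1 - (1/2) ^ (n - 1)) ^ (n * (n - 1) div 2 + 1)"
    using assms tau_threshold[of n]
    by (intro prob_tau_ge_le_power) (auto simp: sum_lessThan_trans_pmf_from_base_1 power_le_one)
  also have "\<dots> \<le> 1 / 2"
    using assms by (rule small_chain_power_le_half)
  finally show ?thesis .
qed

lemma prob_tau_ge_le_half_large:
  assumes "4 \<le> n"
  shows "prob_tau_ge n ((real n ^ 2 - real n + 3) / 2) \<le> 1 / 2"
proof -
  have "prob_tau_ge n ((real n ^ 2 - real n + 3) / 2) \<le> chain_barrier n (n * (n - 1) div 2 + 1) 1"
    using assms tau_threshold[of n]
    by (intro prob_tau_ge_le_superharmonic chain_barrier_0_ge_one chain_barrier_superharmonic) auto
  also have "\<dots> = barrier (pi / (2 * real n)) 0 (n * n)"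
    using assms by (intro chain_barrier_start) simp
  also have "\<dots> \<le> 1 / 2"
    using assms by (rule barrier_0_le_half)
  finally show ?thesis .
qed

theorem lemma6:
  fixes n :: nat
  assumes "n \<ge> 2"
  shows "prob_tau_ge n ((real n ^ 2 - real n + 3) / 2) \<le> 1 / 2"
proof (cases "n \<le> 3")
  case True
  with assms show ?thesis by (rule prob_tau_ge_le_half_small)
next
  case False
  then show ?thesis by (intro prob_tau_ge_le_half_large) simp
qed

end
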